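(* Let $S$ be an isolated invariant set with isolating neighborhood $N$ (so $S=\operatorname{Inv} N$). For any neighborhood $V$ of $S$ in $N$ there is an $\varepsilon>0$ with $C_\varepsilon(N,S)\subset V$.
   Context: Let $X$ be a locally compact metric space with metric $d$, $U\subset X$ open and $f:U\to X$ continuous. A solution through $x$ is a map $\sigma:\mathbb Z\to U$ with $\sigma(0)=x$ and $f(\sigma(n))=\sigma(n+1)$ for all $n$; for $N\subset U$, $\operatorname{Inv} N$ is the set of $x\in N$ admitting a solution through $x$ with all values in $N$. A compact $N\subset U$ is an isolating neighborhood if $\operatorname{Inv} N\subset\operatorname{Int} N$; $S$ is an isolated invariant set if $S=\operatorname{Inv} N$ for some isolating neighborhood $N$. For $\varepsilon>0$, a sequence $\{x_n\}_{n=q}^p$ is an $\varepsilon$-chain if $d(f(x_n),x_{n+1})<\varepsilon$ for $n=q,\dots,p-1$. The $\varepsilon$-chain neighborhood $C_\varepsilon(N,S)$ is the set of all $x\in N$ such that for some $k\ge0$ there is an $\varepsilon$-chain $\{x_n\}_{n=-k}^k\subset N$ with $x_0=x$ and $x_k,x_{-k}\in S$. *)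

theory Defs
  imports "HOL-Analysis.Analysis"
begin

definition is_solution :: "('a \<Rightarrow> 'a) \<Rightarrow> 'a set \<Rightarrow> (int \<Rightarrow> 'a) \<Rightarrow> 'a \<Rightarrow> bool" where
  "is_solution f U \<sigma> x \<longleftrightarrow> \<sigma> 0 = x \<and> (\<forall>n. \<sigma> n \<in> U) \<and> (\<forall>n. f (\<sigma> n) = \<sigma> (n + 1))"

definition Inv :: "('a \<Rightarrow> 'a) \<Rightarrow> 'a set \<Rightarrow> 'a set" where
  "Inv f N = {x \<in> N. \<exists>\<sigma>. is_solution f N \<sigma> x}"

definition isolating_neighborhood :: "('a::topological_space \<Rightarrow> 'a) \<Rightarrow> 'a set \<Rightarrow> 'a set \<Rightarrow> bool" where
  "isolating_neighborhood f U N \<longleftrightarrow> compact N \<and> N \<subseteq> U \<and> Inv f N \<subseteq> interior N"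

definition eps_chain :: "('a::metric_space \<Rightarrow> 'a) \<Rightarrow> real \<Rightarrow> (int \<Rightarrow> 'a) \<Rightarrow> int \<Rightarrow> int \<Rightarrow> bool" where
  "eps_chain f \<epsilon> xs q p \<longleftrightarrow> (\<forall>n. q \<le> n \<and> n < p \<longrightarrow> dist (f (xs n)) (xs (n + 1)) < \<epsilon>)"

definition chain_nbhd :: "('a::metric_space \<Rightarrow> 'a) \<Rightarrow> real \<Rightarrow> 'a set \<Rightarrow> 'a set \<Rightarrow> 'a set" where
  "chain_nbhd f \<epsilon> N S = {x \<in> N. \<exists>k::nat. \<exists>xs. eps_chain f \<epsilon> xs (- int k) (int k)
       \<and> (\<forall>n. - int k \<le> n \<and> n \<le> int k \<longrightarrow> xs n \<in> N)
       \<and> xs 0 = x \<and> xs (int k) \<in> S \<and> xs (- int k) \<in> S}"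

end

theory Submission
  imports Defs
begin

(* Argue by contradiction: if every C_eps(N,S) leaves V, then for eps = 1/(m+1) there is an
   eps-chain in N through a point outside a fixed open W \<supseteq> S. Since its ends lie in
   S = Inv N, it can be continued by the solutions through them to a bi-infinite eps-chain in N.
   By Tychonoff a subsequence of these chains converges pointwise; the limit is a full orbit in
   the compact set N, i.e. lies in Inv N \<subseteq> W, yet its value at 0 lies in the closed set N - W. *)

lemma compact_pointwise_convergent_subseq:
  fixes ys :: "nat \<Rightarrow> 'i::countable \<Rightarrow> 'a::metric_space"
  assumes "compact N" and "\<And>m i. ys m i \<in> N"
  obtains r y where "strict_mono r" and "\<And>i. y i \<in> N" and "\<And>i. (\<lambda>m. ys (r m) i) \<longlonglongrightarrow> y i"
proof -
  have "compactin (product_topology (\<lambda>_. euclidean) UNIV) (PiE UNIV (\<lambda>_::'i. N))"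
    using assms(1) by (simp add: compactin_PiE)
  then have "compact (UNIV \<rightarrow> N :: ('i \<Rightarrow> 'a) set)"
    by (simp add: euclidean_product_topology PiE_UNIV_domain)
  then obtain y r where "y \<in> UNIV \<rightarrow> N" "strict_mono r" "(ys \<circ> r) \<longlonglongrightarrow> y"
    using compact_imp_seq_compact assms(2) unfolding seq_compact_def by (metis Pi_I)
  moreover have "(\<lambda>m. ys (r m) i) \<longlonglongrightarrow> y i" for i
    using continuous_on_tendsto_compose[OF continuous_on_product_coordinates \<open>(ys \<circ> r) \<longlonglongrightarrow> y\<close>]
    by (simp add: o_def)
  ultimately show thesis
    using that by blast
qed

lemma continuous_on_approximate_image_limit:
  fixes f :: "'a::metric_space \<Rightarrow> 'b::metric_space"
  assumes "continuous_on N f" and "x \<in> N" and "\<And>m. xs m \<in> N"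
    and "xs \<longlonglongrightarrow> x" and "ys \<longlonglongrightarrow> y"
    and "(\<lambda>m. dist (f (xs m)) (ys m)) \<longlonglongrightarrow> 0"
  shows "f x = y"
proof -
  have "(\<lambda>m. f (xs m)) \<longlonglongrightarrow> f x"
    using assms(3) by (intro continuous_on_tendsto_compose[OF assms(1,4,2)]) simp
  then have "(\<lambda>m. dist (f (xs m)) (ys m)) \<longlonglongrightarrow> dist (f x) y"
    using assms(5) by (rule tendsto_dist)
  then have "dist (f x) y = 0"
    using assms(6) by (rule LIMSEQ_unique)
  then show ?thesis
    by simp
qed

lemma mem_Inv_iff:
  "x \<in> Inv f N \<longleftrightarrow> (\<exists>\<sigma>::int \<Rightarrow> _. \<sigma> 0 = x \<and> (\<forall>n. \<sigma> n \<in> N) \<and> (\<forall>n. f (\<sigma> n) = \<sigma> (n + 1)))"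
  unfolding Inv_def is_solution_def by auto

lemma eps_chain_extend_by_solutions:
  fixes f :: "'a::metric_space \<Rightarrow> 'a"
  assumes "eps_chain f e xs q p" and "q \<le> p" and "\<forall>n. q \<le> n \<and> n \<le> p \<longrightarrow> xs n \<in> N"
    and "xs q \<in> Inv f N" and "xs p \<in> Inv f N" and "e > 0"
  obtains zs where "\<forall>n. q \<le> n \<and> n \<le> p \<longrightarrow> zs n = xs n" and "\<And>n. zs n \<in> N"
    and "\<And>n. dist (f (zs n)) (zs (n + 1)) < e"
proof -
  obtain \<sigma> :: "int \<Rightarrow> 'a" where \<sigma>0: "\<sigma> 0 = xs q" and \<sigma>N: "\<And>n. \<sigma> n \<in> N"
    and \<sigma>f: "\<And>n. f (\<sigma> n) = \<sigma> (n + 1)"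
    using assms(4) unfolding mem_Inv_iff by blast
  obtain \<tau> :: "int \<Rightarrow> 'a" where \<tau>0: "\<tau> 0 = xs p" and \<tau>N: "\<And>n. \<tau> n \<in> N"
    and \<tau>f: "\<And>n. f (\<tau> n) = \<tau> (n + 1)"
    using assms(5) unfolding mem_Inv_iff by blast
  define zs where "zs n = (if n < q then \<sigma> (n - q) else if p < n then \<tau> (n - p) else xs n)" for n
  have "zs n \<in> N" for n
    using \<sigma>N \<tau>N assms(3) by (simp add: zs_def)
  moreover have "dist (f (zs n)) (zs (n + 1)) < e" for n
  proof -
    consider "n < q" | "q \<le> n" "n < p" | "p \<le> n" by linarith
    then show ?thesis
    proof cases
      case 1
      then have "f (zs n) = zs (n + 1)"
        using \<sigma>f[of "n - q"] \<sigma>0 assms(2) by (cases "n + 1 = q") (simp_all add: zs_def algebra_simps)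
      then show ?thesis using assms(6) by simp
    next
      case 2
      then show ?thesis using assms(1) by (simp add: zs_def eps_chain_def)
    next
      case 3
      then have "f (zs n) = zs (n + 1)"
        using \<tau>f[of "n - p"] \<tau>0 assms(2) by (cases "n = p") (simp_all add: zs_def algebra_simps)
      then show ?thesis using assms(6) by simp
    qed
  qed
  moreover have "\<forall>n. q \<le> n \<and> n \<le> p \<longrightarrow> zs n = xs n"
    by (simp add: zs_def)
  ultimately show thesis
    using that by blast
qed

lemma chain_nbhd_point_on_bi_infinite_chain:
  fixes f :: "'a::metric_space \<Rightarrow> 'a"
  assumes "x \<in> chain_nbhd f e N (Inv f N)" and "e > 0"
  obtains zs :: "int \<Rightarrow> 'a" where "zs 0 = x" and "\<And>n. zs n \<in> N" and "\<And>n. dist (f (zs n)) (zs (n + 1)) < e"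
proof -
  obtain k xs where chain: "eps_chain f e xs (- int k) (int k)"
    and inN: "\<forall>n. - int k \<le> n \<and> n \<le> int k \<longrightarrow> xs n \<in> N"
    and "xs 0 = x" and ends: "xs (- int k) \<in> Inv f N" "xs (int k) \<in> Inv f N"
    using assms(1) unfolding chain_nbhd_def by blast
  have "- int k \<le> int k"
    by simp
  then obtain zs where zs_xs: "\<forall>n. - int k \<le> n \<and> n \<le> int k \<longrightarrow> zs n = xs n"
    and zs_N: "\<And>n. zs n \<in> N" and zs_chain: "\<And>n. dist (f (zs n)) (zs (n + 1)) < e"
    using eps_chain_extend_by_solutions[OF chain _ inN ends assms(2)] by blast
  have "zs 0 = x"
    using zs_xs \<open>xs 0 = x\<close> by simp
  then show thesis
    using zs_N zs_chain by (rule that)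
qed

lemma vanishing_chains_accumulate_in_Inv:
  fixes f :: "'a::metric_space \<Rightarrow> 'a" and zs :: "nat \<Rightarrow> int \<Rightarrow> 'a"
  assumes "compact N" and "continuous_on N f" and "\<And>m n. zs m n \<in> N"
    and "\<And>m n. dist (f (zs m n)) (zs m (n + 1)) \<le> e m" and "e \<longlonglongrightarrow> 0"
  obtains r x where "strict_mono r" and "(\<lambda>m. zs (r m) 0) \<longlonglongrightarrow> x" and "x \<in> Inv f N"
proof -
  obtain r y where r: "strict_mono r" and yN: "\<And>n. y n \<in> N"
    and lim: "\<And>n. (\<lambda>m. zs (r m) n) \<longlonglongrightarrow> y n"
    using compact_pointwise_convergent_subseq[of N zs] assms(1,3) by blast
  have "(\<lambda>m. e (r m)) \<longlonglongrightarrow> 0"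
    using LIMSEQ_subseq_LIMSEQ[OF assms(5) r] by (simp add: o_def)
  then have "(\<lambda>m. dist (f (zs (r m) n)) (zs (r m) (n + 1))) \<longlonglongrightarrow> 0" for n
    by (rule Lim_null_comparison[rotated]) (simp add: assms(4))
  then have "f (y n) = y (n + 1)" for n
    using continuous_on_approximate_image_limit[OF assms(2) yN _ lim lim] assms(3) by blast
  then have "y 0 \<in> Inv f N"
    using yN unfolding mem_Inv_iff by blast
  then show thesis
    using that r lim by blast
qed

lemma Inv_meets_closed_set_met_by_chain_nbhds:
  fixes f :: "'a::metric_space \<Rightarrow> 'a"
  assumes "compact N" and "continuous_on N f" and "closed F"
    and "\<And>m. e m > 0" and "e \<longlonglongrightarrow> 0"
    and "\<And>m. chain_nbhd f (e m) N (Inv f N) \<inter> F \<noteq> {}"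
  shows "Inv f N \<inter> F \<noteq> {}"
proof -
  have "\<exists>z :: int \<Rightarrow> 'a. z 0 \<in> F \<and> (\<forall>n. z n \<in> N) \<and> (\<forall>n. dist (f (z n)) (z (n + 1)) \<le> e m)" for m
  proof -
    obtain x where x: "x \<in> chain_nbhd f (e m) N (Inv f N)" and "x \<in> F"
      using assms(6) by blast
    moreover obtain z :: "int \<Rightarrow> 'a" where "z 0 = x" and "\<And>n. z n \<in> N"
      and "\<And>n. dist (f (z n)) (z (n + 1)) < e m"
      using chain_nbhd_point_on_bi_infinite_chain[OF x assms(4)] by blast
    ultimately show ?thesis
      using less_imp_le by blast
  qed
  then obtain zs :: "nat \<Rightarrow> int \<Rightarrow> 'a" where zs: "\<And>m. zs m 0 \<in> F \<and> (\<forall>n. zs m n \<in> N)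
      \<and> (\<forall>n. dist (f (zs m n)) (zs m (n + 1)) \<le> e m)"
    by metis
  then have "\<And>m n. zs m n \<in> N" and "\<And>m n. dist (f (zs m n)) (zs m (n + 1)) \<le> e m"
    by auto
  then obtain r x where lim: "(\<lambda>m. zs (r m) 0) \<longlonglongrightarrow> x" and "x \<in> Inv f N"
    using vanishing_chains_accumulate_in_Inv[of N f zs e] assms(1,2,5) by blast
  moreover have "x \<in> F"
    using assms(3) _ lim by (rule closed_sequentially) (use zs in blast)
  ultimately show ?thesis
    by blast
qed

theorem mainTheorem9:
  fixes f :: "'a::metric_space \<Rightarrow> 'a" and U N S V :: "'a set"
  assumes "locally_compact_space (euclidean :: 'a topology)"
    and "open U"
    and "continuous_on U f"
    and "isolating_neighborhood f U N"
    and "S = Inv f N"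
    and "V \<subseteq> N"
    and "\<exists>W. open W \<and> S \<subseteq> W \<and> W \<inter> N \<subseteq> V"
  shows "\<exists>\<epsilon>>0. chain_nbhd f \<epsilon> N S \<subseteq> V"
proof (rule ccontr)
  assume escape: "\<not> ?thesis"
  obtain W where "open W" and "S \<subseteq> W" and "W \<inter> N \<subseteq> V"
    using assms(7) by blast
  have "compact N" and "continuous_on N f"
    using assms(3,4) continuous_on_subset unfolding isolating_neighborhood_def by auto
  define e where "e m = inverse (real (Suc m))" for m
  have e_pos: "e m > 0" for m
    by (simp add: e_def)
  have "e \<longlonglongrightarrow> 0"
    unfolding e_def by (rule LIMSEQ_inverse_real_of_nat)
  moreover have "chain_nbhd f (e m) N (Inv f N) \<inter> (N - W) \<noteq> {}" for m
    using escape e_pos \<open>W \<inter> N \<subseteq> V\<close> assms(5) unfolding chain_nbhd_def by blast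
  moreover have "closed (N - W)"
    using \<open>compact N\<close> \<open>open W\<close> by (intro closed_Diff compact_imp_closed)
  ultimately have "Inv f N \<inter> (N - W) \<noteq> {}"
    using Inv_meets_closed_set_met_by_chain_nbhds \<open>compact N\<close> \<open>continuous_on N f\<close> e_pos by blast
  then show False
    using \<open>S \<subseteq> W\<close> assms(5) by blast
qed

end
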